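(* (1) For every integer $n\ge 0$, the polynomials $B_n(t)$ and $B_{n+1}(t)$ are coprime in $\mathbb{Z}[t]$, i.e. $\gcd(B_n(t),B_{n+1}(t))=1$. (2) If $a,b$ are odd positive integers with $a+b=2^{n}$ for some $n$, then $\gcd(B_a(t),B_b(t))=1$.
   Context: The Stern polynomials $B_n(t)\in\mathbb{Z}[t]$, $n\ge 0$, are defined by $B_0(t)=0$, $B_1(t)=1$, $B_{2n}(t)=tB_n(t)$ and $B_{2n+1}(t)=B_n(t)+B_{n+1}(t)$ for $n\ge 1$. *)

theory Defs
  imports "HOL-Computational_Algebra.Computational_Algebra"
begin

function stern_poly :: "nat \<Rightarrow> int poly" where
  "stern_poly n =
     (if n = 0 then 0
      else if n = 1 then 1
      else if even n then [:0, 1:] * stern_poly (n div 2)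
      else stern_poly (n div 2) + stern_poly (n div 2 + 1))"
  by auto
termination by (relation "measure id") (auto elim!: oddE)

lemma stern_poly_0: "stern_poly 0 = 0" by simp
lemma stern_poly_1: "stern_poly 1 = 1" by simp
lemma stern_poly_even: "n \<ge> 1 \<Longrightarrow> stern_poly (2*n) = [:0,1:] * stern_poly n" by simp
lemma stern_poly_odd: "n \<ge> 1 \<Longrightarrow> stern_poly (2*n+1) = stern_poly n + stern_poly (n+1)" by simp

declare stern_poly.simps[simp del]

end

theory Submission
  imports Defs
begin

(* Write t = [:0,1:].  Evaluating the recurrences at t = 0 shows
   B_n(0) = 1 for odd n, so the prime polynomial t does not divide B_n for odd n.
   (1) Coprimality of B_n and B_{n+1} follows by strong induction on n: for
   n = 2m the pair is (t B_m, B_m + B_{m+1}), for n = 2m+1 it is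
   (B_m + B_{m+1}, t B_{m+1}); in both cases the factor t is harmless because
   B_{2m+1} is coprime to t, and the remaining factors are coprime by the
   induction hypothesis.
   (2) By induction on m one proves the determinant identity
   B_{k+1} B_{l+1} - B_k B_l = t^m whenever k + l + 1 = 2^m.  For odd
   a = 2k+1, b = 2l+1 with a + b = 2^(m+1), any common divisor of B_a and B_b
   divides a combination equal to t^m, while t^m is coprime to B_a. *)

lemma stern_poly_double: "stern_poly (2 * n) = [:0, 1:] * stern_poly n"
  by (cases "n = 0") (simp_all add: stern_poly_even stern_poly_0)

lemma stern_poly_Suc_0 [simp]: "stern_poly (Suc 0) = 1"
  using stern_poly_1 by simp

lemma stern_poly_Suc_double: "stern_poly (2 * n + 1) = stern_poly n + stern_poly (n + 1)"
  using stern_poly_odd[of n] by (cases "n = 0") (simp_all add: stern_poly_0)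

lemma stern_poly_eval_0: "poly (stern_poly n) 0 = (if odd n then 1 else 0)"
proof (induction n rule: less_induct)
  case (less n)
  consider (zero) "n = 0" | (even) m where "n = 2 * m" "m > 0" | (odd) m where "n = 2 * m + 1"
    by (metis oddE evenE neq0_conv mult_0_right)
  then show ?case
  proof cases
    case zero
    then show ?thesis by (simp add: stern_poly_0)
  next
    case even
    then show ?thesis by (simp add: stern_poly_double)
  next
    case odd
    then have "poly (stern_poly n) 0 = poly (stern_poly m) 0 + poly (stern_poly (m + 1)) 0"
      using stern_poly_Suc_double[of m] by simp
    also have "\<dots> = 1"
      using less[of m] less[of "m + 1"] odd by (cases "m = 0") auto
    finally show ?thesis using odd by simp
  qed
qed

lemma coprime_t_stern_poly_odd:
  assumes "odd n"
  shows "coprime [:0, 1:] (stern_poly n)"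
proof -
  have "prime_elem ([:0, 1:] :: int poly)"
    by (rule prime_elem_linear_poly) auto
  moreover have "\<not> [:0, 1:] dvd stern_poly n"
    using dvd_iff_poly_eq_0[of 0 "stern_poly n"] stern_poly_eval_0[of n] assms by simp
  ultimately show ?thesis
    using prime_elem_imp_coprime by blast
qed

lemma coprime_t_stern_poly_sum: "coprime [:0, 1:] (stern_poly m + stern_poly (m + 1))"
  using coprime_t_stern_poly_odd[of "2 * m + 1"] stern_poly_Suc_double[of m] by simp

lemma coprime_stern_poly_Suc: "coprime (stern_poly n) (stern_poly (n + 1))"
proof (induction n rule: less_induct)
  case (less n)
  show ?case
  proof (cases "even n")
    case True
    then obtain m where m: "n = 2 * m" by blast
    have "coprime (stern_poly m) (stern_poly m + stern_poly (m + 1))"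
    proof (cases "m = 0")
      case True
      then show ?thesis by (simp add: stern_poly_0)
    next
      case False
      then have "coprime (stern_poly m) (stern_poly (m + 1))" using less[of m] m by simp
      then show ?thesis by (simp add: coprime_iff_gcd_eq_1)
    qed
    moreover have "coprime [:0, 1:] (stern_poly m + stern_poly (m + 1))"
      by (rule coprime_t_stern_poly_sum)
    ultimately show ?thesis
      by (simp only: m stern_poly_double stern_poly_Suc_double coprime_mult_left_iff)
  next
    case False
    then obtain m where m: "n = 2 * m + 1" using oddE by blast
    have "coprime (stern_poly m + stern_poly (m + 1)) (stern_poly (m + 1))"
      using less[of m] m by (simp add: coprime_iff_gcd_eq_1)
    moreover have "coprime (stern_poly m + stern_poly (m + 1)) [:0, 1:]"
      using coprime_t_stern_poly_sum[of m] by (simp add: coprime_commute)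
    ultimately have "coprime (stern_poly m + stern_poly (m + 1)) ([:0, 1:] * stern_poly (m + 1))"
      by (simp only: coprime_mult_right_iff)
    moreover have "stern_poly (n + 1) = [:0, 1:] * stern_poly (m + 1)"
      using m stern_poly_double[of "m + 1"] by simp
    ultimately show ?thesis
      using m stern_poly_Suc_double[of m] by simp
  qed
qed

text \<open>The determinant identity: B_{k+1} B_{l+1} - B_k B_l = t^m when k + l + 1 = 2^m.
  One step of the induction, for even k, halves both indices.\<close>

lemma stern_poly_det_step:
  "stern_poly (2 * p + 1) * stern_poly (2 * q + 2) - stern_poly (2 * p) * stern_poly (2 * q + 1)
     = [:0, 1:] * (stern_poly (p + 1) * stern_poly (q + 1) - stern_poly p * stern_poly q)"
proof -
  have "stern_poly (2 * q + 2) = [:0, 1:] * stern_poly (q + 1)"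
    using stern_poly_double[of "q + 1"] by simp
  then show ?thesis
    unfolding stern_poly_double stern_poly_Suc_double by (simp add: algebra_simps)
qed

lemma stern_poly_det:
  "k + l + 1 = 2 ^ m \<Longrightarrow>
     stern_poly (k + 1) * stern_poly (l + 1) - stern_poly k * stern_poly l = [:0, 1:] ^ m"
proof (induction m arbitrary: k l)
  case 0
  then show ?case by (simp add: stern_poly_0 stern_poly_1)
next
  case (Suc m)
  have even_case: "stern_poly (k + 1) * stern_poly (l + 1) - stern_poly k * stern_poly l
      = [:0, 1:] ^ Suc m" if sum: "k + l + 1 = 2 ^ Suc m" and "even k" for k l
  proof -
    obtain p where p: "k = 2 * p" using \<open>even k\<close> by blast
    have "even (k + l + 1)" using sum by simp
    then have "odd l" using \<open>even k\<close> by simp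
    then obtain q where q: "l = 2 * q + 1" using oddE by blast
    have "p + q + 1 = 2 ^ m" using sum p q by simp
    then show ?thesis
      using Suc.IH stern_poly_det_step[of p q] p q by (simp add: add.assoc)
  qed
  show ?case
  proof (cases "even k")
    case True
    then show ?thesis using even_case Suc.prems by blast
  next
    case False
    moreover have "even (k + l + 1)" using Suc.prems by simp
    ultimately have "even l" by simp
    then show ?thesis
      using even_case[of l k] Suc.prems by (simp add: add.commute mult.commute)
  qed
qed

lemma coprime_stern_poly_pow2:
  assumes "odd a" "odd b" "a + b = 2 ^ n"
  shows "coprime (stern_poly a) (stern_poly b)"
proof (rule coprimeI)
  fix g assume ga: "g dvd stern_poly a" and gb: "g dvd stern_poly b"
  obtain k where k: "a = 2 * k + 1" using assms(1) oddE by blast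
  obtain l where l: "b = 2 * l + 1" using assms(2) oddE by blast
  obtain m where m: "n = Suc m" using assms(3) k l by (cases n) auto
  have "k + l + 1 = 2 ^ m" using assms(3) k l m by simp
  moreover have "stern_poly a = stern_poly k + stern_poly (k + 1)"
    and "stern_poly b = stern_poly l + stern_poly (l + 1)"
    using k l stern_poly_Suc_double by simp_all
  ultimately have "stern_poly a * stern_poly (l + 1) - stern_poly k * stern_poly b = [:0, 1:] ^ m"
    using stern_poly_det[of k l m] by (simp add: algebra_simps)
  moreover have "g dvd stern_poly a * stern_poly (l + 1) - stern_poly k * stern_poly b"
    using ga gb by simp
  ultimately have "g dvd [:0, 1:] ^ m" by simp
  moreover have "coprime ([:0, 1:] ^ m) (stern_poly a)"
    using coprime_t_stern_poly_odd[OF assms(1)] by simp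
  ultimately show "is_unit g"
    using ga coprime_common_divisor by blast
qed

theorem corollary2p6:
  shows "(\<forall>n::nat. gcd (stern_poly n) (stern_poly (n + 1)) = 1) \<and>
         (\<forall>a b n::nat. odd a \<longrightarrow> odd b \<longrightarrow> 0 < a \<longrightarrow> 0 < b \<longrightarrow> a + b = 2 ^ n \<longrightarrow>
            gcd (stern_poly a) (stern_poly b) = 1)"
  using coprime_stern_poly_Suc coprime_stern_poly_pow2
  by (auto simp: coprime_iff_gcd_eq_1)

end
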